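(* In the setting of the $i$-th horizontal composition of $\phi$ (with $n$ variables) and $\psi$ (with $m$ variables, dinatural in its $i$-th variable), let $k\in n$. Then $\phi\ast_i\psi$ is dinatural in its $(i-1+k)$-th variable if and only if, for all choices of objects $B_1,\dots,B_{i-1},A_1,\dots,A_{k-1},A_{k+1},\dots,A_n,B_{i+1},\dots,B_m$ of $\mathbb C$ (used to form the focalisations $\bar\phi^k$ and $\bar\psi^i$), the classical horizontal composite $\bar\phi^k\ast\bar\psi^i$ is dinatural in its only variable.
   Context: Notation: $k$ also denotes $\{1,\dots,k\}$; $\mathbb C^\alpha=\mathbb C^{\alpha_1}\times\cdots$ with $\mathbb C^+=\mathbb C$, $\mathbb C^-=\mathbb C^{op}$; for $\mathbf A=(A_1,\dots,A_n)$, $\sigma\colon k\to n$, $\mathbf A\sigma=(A_{\sigma1},\dots,A_{\sigma k})$; a morphism in a contravariant argument is read in $\mathbb C^{op}$. A transformation $\phi\colon F\to G$ ($F\colon\mathbb C^\alpha\to\mathbb C$, $G\colon\mathbb C^\beta\to\mathbb C$) of type $|\alpha|\xrightarrow{\sigma}n\xleftarrow{\tau}|\beta|$ is a family $\phi_{\mathbf A}\colon F(\mathbf A\sigma)\to G(\mathbf A\tau)$, $\mathbf A\in\mathrm{Ob}(\mathbb C)^n$. $\mathbf A[X,Y/i]\sigma$ is the tuple whose $j$-th entry is $X$ if $\sigma j=i,\alpha_j=-$, $Y$ if $\sigma j=i,\alpha_j=+$, $A_{\sigma j}$ (or $1_{A_{\sigma j}}$ for morphisms) otherwise; $\mathbf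 A[X/i]=\mathbf A[X,X/i]$. $\phi$ is dinatural in its $i$-th variable if for all $A_j$ ($j\ne i$) and $f\colon A\to B$: $G(\mathbf A[A,f/i]\tau)\circ\phi_{\mathbf A[A/i]}\circ F(\mathbf A[f,A/i]\sigma)=G(\mathbf A[f,B/i]\tau)\circ\phi_{\mathbf A[B/i]}\circ F(\mathbf A[B,f/i]\sigma)$. Focalisation: for $\varphi\colon T\to S$ of type $|\alpha|\xrightarrow{\sigma}p\xleftarrow{\tau}|\beta|$ and fixed objects $A_j$ ($j\ne k$), $\bar T^k,\bar S^k\colon\mathbb C^{op}\times\mathbb C\to\mathbb C$ are $\bar T^k(X,Y)=T(\mathbf A[X,Y/k]\sigma)$, $\bar S^k(X,Y)=S(\mathbf A[X,Y/k]\tau)$ (also on morphisms), and $\bar\varphi^k\colon\bar T^k\to\bar S^k$ is the transformation of type $2\to1\leftarrow2$ with $\bar\varphi^k_X=\varphi_{\mathbf A[X/k]}$. Classical horizontal composite: for $\phi\colon F\to G$ and $\psi\colon H\to K$ of type $2\to1\leftarrow2$ with $F,G,H,K\colon\mathbb C^{op}\times\mathbb C\to\mathbb C$ and $\psi$ dinatural, $\phi\ast\psi\colon H(G^{op},F)\to K(F^{op},G)$ is the transformation of type $4\to1\leftarrow4$ between the functors $\mathbb C^{[+,-,-,+]}\to\mathbb C$, $(A,B,C,D)\mapsto H(G(A,B),F(C,D))$ and $(A,B,C,D)\mapsto K(F(A,B),G(C,D))$, with components $(\phi\ast\psi)_A=K(1,\phi_A)\circ\psi_{F(A,A)}\circ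 H(\phi_A,1)$. General $i$-th horizontal composition: let $F\colon\mathbb C^\alpha\to\mathbb C$, $G\colon\mathbb C^\beta\to\mathbb C$, $H\colon\mathbb C^\gamma\to\mathbb C$, $K\colon\mathbb C^\delta\to\mathbb C$, $\phi\colon F\to G$ of type $|\alpha|\xrightarrow{\sigma}n\xleftarrow{\tau}|\beta|$ with variables $\mathbf A=(A_1,\dots,A_n)$, and $\psi\colon H\to K$ of type $|\gamma|\xrightarrow{\eta}m\xleftarrow{\theta}|\delta|$ with variables $\mathbf B=(B_1,\dots,B_m)$, dinatural in its $i$-th variable. $\phi\ast_i\psi$ has variables $(B_1,\dots,B_{i-1},A_1,\dots,A_n,B_{i+1},\dots,B_m)$. Its domain functor is obtained from $H$ by substituting into each argument position $u$ with $\eta u=i$ the functor $F$ if $\gamma_u=+$ and $G^{op}$ if $\gamma_u=-$; its codomain from $K$ by substituting into each position $v$ with $\theta v=i$ the functor $G$ if $\delta_v=+$ and $F^{op}$ if $\delta_v=-$. In its type, an argument coming from the $j$-th argument of a copy of $F$ has variable $A_{\sigma j}$, from a copy of $G$ variable $A_{\tau j}$, and unchanged positions $u$ of $H$ (resp. $v$ of $K$) variable $B_{\eta u}$ (resp. $B_{\theta v}$). Its component at $\mathbf B[\mathbf A/i]$ is $K(\mathbf B[F(\mathbf A\sigma),\phi_{\mathbf A}/i]\theta)\circ\psi_{\mathbf B[F(\mathbf A\sigma)/i]}\circ H(\mathbf B[\phi_{\mathbf A},F(\mathbf A\sigma)/i]\eta)$. *)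

theory Defs
  imports Main
begin

text \<open>A (single) category with objects of type 'o and morphisms of type 'm.
  Comp g f is the composite g after f.\<close>

record ('o, 'm) category =
  Ob :: "'o set"
  Hom :: "'o \<Rightarrow> 'o \<Rightarrow> 'm set"
  Id :: "'o \<Rightarrow> 'm"
  Comp :: "'m \<Rightarrow> 'm \<Rightarrow> 'm"

definition is_category :: "('o, 'm) category \<Rightarrow> bool" where
  "is_category C \<longleftrightarrow>
     (\<forall>a b f. f \<in> Hom C a b \<longrightarrow> a \<in> Ob C \<and> b \<in> Ob C) \<and>
     (\<forall>a \<in> Ob C. Id C a \<in> Hom C a a) \<and>
     (\<forall>a b c f g. f \<in> Hom C a b \<and> g \<in> Hom C b c \<longrightarrow> Comp C g f \<in> Hom C a c) \<and>
     (\<forall>a b f. f \<in> Hom C a b \<longrightarrow> Comp C f (Id C a) = f \<and> Comp C (Id C b) f = f) \<and>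
     (\<forall>a b c d f g h. f \<in> Hom C a b \<and> g \<in> Hom C b c \<and> h \<in> Hom C c d \<longrightarrow>
        Comp C h (Comp C g f) = Comp C (Comp C h g) f)"

text \<open>Tuples of objects of length n (indices are 0-based throughout).\<close>

definition obs :: "('o, 'm) category \<Rightarrow> nat \<Rightarrow> 'o list set" where
  "obs C n = {A. length A = n \<and> set A \<subseteq> Ob C}"

text \<open>A variance list alpha: True means + (covariant, C), False means - (C^op).\<close>

definition mhom :: "('o, 'm) category \<Rightarrow> bool list \<Rightarrow> 'o list \<Rightarrow> 'o list \<Rightarrow> 'm list set" where
  "mhom C \<alpha> A B = {fs. length fs = length \<alpha> \<and>
     (\<forall>j < length \<alpha>. fs ! j \<in> (if \<alpha> ! j then Hom C (A ! j) (B ! j) else Hom C (B ! j) (A ! j)))}"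

definition mcomp :: "('o, 'm) category \<Rightarrow> bool list \<Rightarrow> 'm list \<Rightarrow> 'm list \<Rightarrow> 'm list" where
  "mcomp C \<alpha> gs fs = map (\<lambda>j. if \<alpha> ! j then Comp C (gs ! j) (fs ! j) else Comp C (fs ! j) (gs ! j))
     [0..<length \<alpha>]"

definition mvfunctor ::
  "('o, 'm) category \<Rightarrow> bool list \<Rightarrow> ('o list \<Rightarrow> 'o) \<Rightarrow> ('m list \<Rightarrow> 'm) \<Rightarrow> bool" where
  "mvfunctor C \<alpha> Fo Fm \<longleftrightarrow>
     (\<forall>A \<in> obs C (length \<alpha>). Fo A \<in> Ob C) \<and>
     (\<forall>A \<in> obs C (length \<alpha>). \<forall>B \<in> obs C (length \<alpha>). \<forall>fs \<in> mhom C \<alpha> A B.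
        Fm fs \<in> Hom C (Fo A) (Fo B)) \<and>
     (\<forall>A \<in> obs C (length \<alpha>). Fm (map (Id C) A) = Id C (Fo A)) \<and>
     (\<forall>A \<in> obs C (length \<alpha>). \<forall>B \<in> obs C (length \<alpha>). \<forall>D \<in> obs C (length \<alpha>).
        \<forall>fs \<in> mhom C \<alpha> A B. \<forall>gs \<in> mhom C \<alpha> B D.
        Fm (mcomp C \<alpha> gs fs) = Comp C (Fm gs) (Fm fs))"

definition reidx :: "'a list \<Rightarrow> nat list \<Rightarrow> 'a list" where
  "reidx A \<sigma> = map (\<lambda>j. A ! j) \<sigma>"

definition is_transf ::
  "('o, 'm) category \<Rightarrow> nat \<Rightarrow> bool list \<Rightarrow> nat list \<Rightarrow> ('o list \<Rightarrow> 'o)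
   \<Rightarrow> bool list \<Rightarrow> nat list \<Rightarrow> ('o list \<Rightarrow> 'o) \<Rightarrow> ('o list \<Rightarrow> 'm) \<Rightarrow> bool" where
  "is_transf C n \<alpha> \<sigma> Fo \<beta> \<tau> Go \<phi> \<longleftrightarrow>
     length \<sigma> = length \<alpha> \<and> length \<tau> = length \<beta> \<and>
     set \<sigma> \<subseteq> {..<n} \<and> set \<tau> \<subseteq> {..<n} \<and>
     (\<forall>A \<in> obs C n. \<phi> A \<in> Hom C (Fo (reidx A \<sigma>)) (Go (reidx A \<tau>)))"

text \<open>For morphisms one passes the list of
  identities of A.\<close>

definition subst :: "'a list \<Rightarrow> 'a \<Rightarrow> 'a \<Rightarrow> nat \<Rightarrow> nat list \<Rightarrow> bool list \<Rightarrow> 'a list" where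
  "subst A X Y i \<sigma> \<alpha> =
     map (\<lambda>j. if \<sigma> ! j = i then (if \<alpha> ! j then Y else X) else A ! (\<sigma> ! j)) [0..<length \<sigma>]"

definition dinatural ::
  "('o, 'm) category \<Rightarrow> nat \<Rightarrow> bool list \<Rightarrow> nat list \<Rightarrow> ('m list \<Rightarrow> 'm)
   \<Rightarrow> bool list \<Rightarrow> nat list \<Rightarrow> ('m list \<Rightarrow> 'm) \<Rightarrow> ('o list \<Rightarrow> 'm) \<Rightarrow> nat \<Rightarrow> bool" where
  "dinatural C n \<alpha> \<sigma> Fm \<beta> \<tau> Gm \<phi> i \<longleftrightarrow>
     (\<forall>A \<in> obs C n. \<forall>a \<in> Ob C. \<forall>b \<in> Ob C. \<forall>f \<in> Hom C a b.
        Comp C (Gm (subst (map (Id C) A) (Id C a) f i \<tau> \<beta>))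
          (Comp C (\<phi> (A[i := a])) (Fm (subst (map (Id C) A) f (Id C a) i \<sigma> \<alpha>)))
      = Comp C (Gm (subst (map (Id C) A) f (Id C b) i \<tau> \<beta>))
          (Comp C (\<phi> (A[i := b])) (Fm (subst (map (Id C) A) (Id C b) f i \<sigma> \<alpha>))))"

definition foc_o :: "('o list \<Rightarrow> 'o) \<Rightarrow> bool list \<Rightarrow> nat list \<Rightarrow> 'o list \<Rightarrow> nat \<Rightarrow> 'o list \<Rightarrow> 'o" where
  "foc_o To \<alpha> \<sigma> A k xs = To (subst A (xs ! 0) (xs ! 1) k \<sigma> \<alpha>)"

definition foc_m :: "('o, 'm) category \<Rightarrow> ('m list \<Rightarrow> 'm) \<Rightarrow> bool list \<Rightarrow> nat list \<Rightarrow> 'o list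
   \<Rightarrow> nat \<Rightarrow> 'm list \<Rightarrow> 'm" where
  "foc_m C Tm \<alpha> \<sigma> A k fs = Tm (subst (map (Id C) A) (fs ! 0) (fs ! 1) k \<sigma> \<alpha>)"

definition foc_t :: "('o list \<Rightarrow> 'm) \<Rightarrow> 'o list \<Rightarrow> nat \<Rightarrow> 'o list \<Rightarrow> 'm" where
  "foc_t \<phi> A k xs = \<phi> (A[k := xs ! 0])"

text \<open>Domain H(G^op,F): (A,B,C,D) \<mapsto> H(G(A,B),F(C,D)); codomain
  K(F^op,G): (A,B,C,D) \<mapsto> K(F(A,B),G(C,D)), both with variance [+,-,-,+].\<close>

definition cl_var :: "bool list" where
  "cl_var = [True, False, False, True]"

definition cl_ty :: "nat list" where
  "cl_ty = [0, 0, 0, 0]"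

definition cl_dom_m :: "('m list \<Rightarrow> 'm) \<Rightarrow> ('m list \<Rightarrow> 'm) \<Rightarrow> ('m list \<Rightarrow> 'm) \<Rightarrow> 'm list \<Rightarrow> 'm" where
  "cl_dom_m Fm Gm Hm fs = Hm [Gm [fs ! 0, fs ! 1], Fm [fs ! 2, fs ! 3]]"

definition cl_cod_m :: "('m list \<Rightarrow> 'm) \<Rightarrow> ('m list \<Rightarrow> 'm) \<Rightarrow> ('m list \<Rightarrow> 'm) \<Rightarrow> 'm list \<Rightarrow> 'm" where
  "cl_cod_m Fm Gm Km fs = Km [Fm [fs ! 0, fs ! 1], Gm [fs ! 2, fs ! 3]]"

definition cl_comp :: "('o, 'm) category \<Rightarrow> ('o list \<Rightarrow> 'o) \<Rightarrow> ('o list \<Rightarrow> 'm) \<Rightarrow> ('o list \<Rightarrow> 'm)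
   \<Rightarrow> ('m list \<Rightarrow> 'm) \<Rightarrow> ('m list \<Rightarrow> 'm) \<Rightarrow> 'o list \<Rightarrow> 'm" where
  "cl_comp C Fo \<phi> \<psi> Hm Km A =
     (let a = A ! 0; x = Fo [a, a] in
      Comp C (Km [Id C x, \<phi> [a]]) (Comp C (\<psi> [x]) (Hm [\<phi> [a], Id C x])))"

fun split_by :: "nat list \<Rightarrow> 'a list \<Rightarrow> 'a list list" where
  "split_by [] xs = []"
| "split_by (l # ls) xs = take l xs # split_by ls (drop l xs)"

text \<open>Substitution of functors into the argument positions u of an outer functor
  (variance \<gamma>, type \<eta>) with \<eta> u = i: P is plugged into covariant positions
  and Q into contravariant ones (the latter as Q^op); other positions stay.\<close>

definition plug_lens :: "bool list \<Rightarrow> nat list \<Rightarrow> nat \<Rightarrow> nat \<Rightarrow> nat \<Rightarrow> nat list" where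
  "plug_lens \<gamma> \<eta> i lp lq =
     map (\<lambda>u. if \<eta> ! u = i then (if \<gamma> ! u then lp else lq) else 1) [0..<length \<gamma>]"

definition plug_m :: "bool list \<Rightarrow> nat list \<Rightarrow> nat \<Rightarrow> nat \<Rightarrow> nat
   \<Rightarrow> ('a list \<Rightarrow> 'a) \<Rightarrow> ('a list \<Rightarrow> 'a) \<Rightarrow> ('a list \<Rightarrow> 'a) \<Rightarrow> 'a list \<Rightarrow> 'a" where
  "plug_m \<gamma> \<eta> i lp lq Outer P Q xs =
     (let cs = split_by (plug_lens \<gamma> \<eta> i lp lq) xs in
      Outer (map (\<lambda>u. if \<eta> ! u = i then (if \<gamma> ! u then P (cs ! u) else Q (cs ! u))
                       else hd (cs ! u)) [0..<length \<gamma>]))"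

definition plug_var :: "bool list \<Rightarrow> nat list \<Rightarrow> nat \<Rightarrow> bool list \<Rightarrow> bool list \<Rightarrow> bool list" where
  "plug_var \<gamma> \<eta> i pv qv =
     concat (map (\<lambda>u. if \<eta> ! u = i then (if \<gamma> ! u then pv else map Not qv) else [\<gamma> ! u])
       [0..<length \<gamma>])"

text \<open>Variables of the composite: (B_0..B_{i-1}, A_0..A_{n-1}, B_{i+1}..B_{m-1}).\<close>

definition outer_idx :: "nat \<Rightarrow> nat \<Rightarrow> nat \<Rightarrow> nat" where
  "outer_idx i n v = (if v < i then v else v - 1 + n)"

definition plug_ty :: "bool list \<Rightarrow> nat list \<Rightarrow> nat \<Rightarrow> nat \<Rightarrow> nat list \<Rightarrow> nat list \<Rightarrow> nat list" where
  "plug_ty \<gamma> \<eta> i n pt qt =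
     concat (map (\<lambda>u. if \<eta> ! u = i then (if \<gamma> ! u then map ((+) i) pt else map ((+) i) qt)
                      else [outer_idx i n (\<eta> ! u)]) [0..<length \<gamma>])"

text \<open>Components: at \<open>B[A/i]\<close>,
  \<open>K(B[F(A\<sigma>),\<phi>_A/i]\<theta>) \<circ> \<psi>_{B[F(A\<sigma>)/i]} \<circ> H(B[\<phi>_A,F(A\<sigma>)/i]\<eta>)\<close>.\<close>

definition hcomp :: "('o, 'm) category \<Rightarrow> nat \<Rightarrow> nat \<Rightarrow> nat list \<Rightarrow> ('o list \<Rightarrow> 'o)
   \<Rightarrow> ('o list \<Rightarrow> 'm) \<Rightarrow> bool list \<Rightarrow> nat list \<Rightarrow> ('m list \<Rightarrow> 'm)
   \<Rightarrow> bool list \<Rightarrow> nat list \<Rightarrow> ('m list \<Rightarrow> 'm) \<Rightarrow> ('o list \<Rightarrow> 'm) \<Rightarrow> 'o list \<Rightarrow> 'm" where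
  "hcomp C i n \<sigma> Fo \<phi> \<gamma> \<eta> Hm \<delta> \<theta> Km \<psi> Cs =
     (let A = take n (drop i Cs);
          x = Fo (reidx A \<sigma>);
          B = take i Cs @ [x] @ drop (i + n) Cs in
      Comp C (Km (subst (map (Id C) B) (Id C x) (\<phi> A) i \<theta> \<delta>))
        (Comp C (\<psi> B) (Hm (subst (map (Id C) B) (\<phi> A) (Id C x) i \<eta> \<gamma>))))"

end

theory Submission
  imports Defs
begin

text \<open>Both sides are dinaturality conditions, i.e. families of hexagon equations indexed by
  tuples of objects and a morphism \<open>f : a \<rightarrow> b\<close>. Every tuple of variables of the
  \<open>i\<close>-th horizontal composite has the form \<open>B[A/i]\<close>, and conversely. At \<open>B[A/i]\<close>, with
  the \<open>(i-1+k)\<close>-th variable moving, the functors obtained by plugging \<open>F\<close> and \<open>G\<close> into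
  \<open>H\<close> and \<open>K\<close> act on the relevant morphisms exactly as the focalisation of \<open>H\<close> (resp. \<open>K\<close>)
  at \<open>B\<close> composed with the focalisations of \<open>F\<close> and \<open>G\<close> at \<open>A\<close>, and the components of the
  composite are those of the classical composite of the focalised transformations.\<close>

lemma length_subst [simp]: "length (subst A X Y i \<sigma> \<alpha>) = length \<sigma>"
  by (simp add: subst_def)

lemma subst_eq_map_zip:
  "length \<sigma> = length \<alpha> \<Longrightarrow>
   subst A X Y i \<sigma> \<alpha> = map (\<lambda>(t, v). if t = i then (if v then Y else X) else A ! t) (zip \<sigma> \<alpha>)"
  unfolding subst_def by (rule nth_equalityI) auto

lemma zip_concat_map:
  "(\<forall>u \<in> set us. length (f u) = length (g u)) \<Longrightarrow>
   zip (concat (map f us)) (concat (map g us)) = concat (map (\<lambda>u. zip (f u) (g u)) us)"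
  by (induction us) auto

lemma subst_concat:
  assumes "\<forall>u \<in> set us. length (f u) = length (g u)"
  shows "subst A X Y i (concat (map f us)) (concat (map g us))
       = concat (map (\<lambda>u. subst A X Y i (f u) (g u)) us)"
proof -
  have "length (concat (map f us)) = length (concat (map g us))"
    using assms by (simp add: length_concat cong: map_cong)
  then show ?thesis
    using assms by (simp add: subst_eq_map_zip zip_concat_map map_concat cong: map_cong)
qed

lemma subst_map_Not:
  "length \<sigma> = length \<alpha> \<Longrightarrow> subst A X Y i \<sigma> (map Not \<alpha>) = subst A Y X i \<sigma> \<alpha>"
  by (auto simp: subst_def)

lemma subst_map_shift:
  "i \<le> length A \<Longrightarrow> subst A X Y (i + k) (map ((+) i) \<sigma>) \<alpha> = subst (drop i A) X Y k \<sigma> \<alpha>"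
  by (simp add: subst_def)

lemma subst_append_right:
  "set \<sigma> \<subseteq> {..<length A} \<Longrightarrow> subst (A @ R) X Y i \<sigma> \<alpha> = subst A X Y i \<sigma> \<alpha>"
  by (auto simp: subst_def nth_append dest!: nth_mem)

lemma subst_list_update_same: "subst (A[i := z]) X Y i \<sigma> \<alpha> = subst A X Y i \<sigma> \<alpha>"
  by (simp add: subst_def nth_list_update)

lemma subst_same_eq_reidx:
  "set \<sigma> \<subseteq> {..<length A} \<Longrightarrow> subst A c c k \<sigma> \<alpha> = reidx (A[k := c]) \<sigma>"
proof (rule nth_equalityI)
  fix j assume "set \<sigma> \<subseteq> {..<length A}" "j < length (subst A c c k \<sigma> \<alpha>)"
  then have "\<sigma> ! j < length A" "j < length \<sigma>" using nth_mem by fastforce+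
  then show "subst A c c k \<sigma> \<alpha> ! j = reidx (A[k := c]) \<sigma> ! j"
    by (simp add: subst_def reidx_def nth_list_update)
qed (simp add: reidx_def)

lemma split_by_concat:
  "\<forall>u \<in> set us. length (f u) = l u \<Longrightarrow> split_by (map l us) (concat (map f us)) = map f us"
  by (induction us) auto

definition block_update :: "'a list \<Rightarrow> nat \<Rightarrow> 'a list \<Rightarrow> 'a list" where
  "block_update B i A = take i B @ A @ drop (Suc i) B"

lemma length_block_update:
  "i < length B \<Longrightarrow> length (block_update B i A) = length B - 1 + length A"
  by (simp add: block_update_def)

lemma map_block_update: "map f (block_update B i A) = block_update (map f B) i (map f A)"
  by (simp add: block_update_def take_map drop_map)

lemma drop_block_update:
  "i < length B \<Longrightarrow> drop i (block_update B i A) = A @ drop (Suc i) B"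
  by (simp add: block_update_def)

lemma nth_block_update_outer:
  assumes "v < length B" "v \<noteq> i"
  shows "block_update B i A ! outer_idx i (length A) v = B ! v"
  using assms by (cases "v < i") (auto simp: block_update_def outer_idx_def nth_append)

lemma block_update_list_update:
  "i < length B \<Longrightarrow> k < length A \<Longrightarrow>
   (block_update B i A)[i + k := c] = block_update B i (A[k := c])"
  by (simp add: block_update_def list_update_append)

lemma plug_m_subst_block_update:
  assumes \<eta>: "length \<eta> = length \<gamma>" "set \<eta> \<subseteq> {..<length DB}"
    and \<sigma>: "length \<sigma> = length pv" "set \<sigma> \<subseteq> {..<n}"
    and \<tau>: "length \<tau> = length qv" "set \<tau> \<subseteq> {..<n}"
    and DA: "length DA = n" and k: "k < n" and i: "i < length DB"
  shows "plug_m \<gamma> \<eta> i (length \<sigma>) (length \<tau>) Outer P Q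
      (subst (block_update DB i DA) X Y (i + k) (plug_ty \<gamma> \<eta> i n \<sigma> \<tau>) (plug_var \<gamma> \<eta> i pv qv))
    = Outer (subst DB (Q (subst DA Y X k \<tau> qv)) (P (subst DA X Y k \<sigma> pv)) i \<eta> \<gamma>)"
proof -
  let ?Ds = "block_update DB i DA"
  define ty where "ty = (\<lambda>u. if \<eta> ! u = i then (if \<gamma> ! u then map ((+) i) \<sigma> else map ((+) i) \<tau>)
    else [outer_idx i n (\<eta> ! u)])"
  define var where "var = (\<lambda>u. if \<eta> ! u = i then (if \<gamma> ! u then pv else map Not qv)
    else [\<gamma> ! u])"
  define block where "block u = (if \<eta> ! u = i
      then (if \<gamma> ! u then subst DA X Y k \<sigma> pv else subst DA Y X k \<tau> qv)
      else [DB ! (\<eta> ! u)])" for u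
  have inner: "subst ?Ds Z W (i + k) (map ((+) i) \<rho>) v = subst DA Z W k \<rho> v"
    if "set \<rho> \<subseteq> {..<n}" for \<rho> v Z W
    using that i DA by (simp add: subst_map_shift length_block_update drop_block_update
        subst_append_right)
  have blocks: "subst ?Ds X Y (i + k) (ty u) (var u) = block u" if "u < length \<gamma>" for u
  proof (cases "\<eta> ! u = i")
    case False
    have "\<eta> ! u < length DB" using \<eta> that by (metis lessThan_iff nth_mem subsetD)
    moreover have "outer_idx i n (\<eta> ! u) \<noteq> i + k" using False k by (auto simp: outer_idx_def)
    ultimately show ?thesis
      using False nth_block_update_outer[of "\<eta> ! u" DB i DA] DA
      by (simp add: ty_def var_def block_def subst_def)
  qed (simp_all add: ty_def var_def block_def inner \<sigma> \<tau> subst_map_Not)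
  have ty: "plug_ty \<gamma> \<eta> i n \<sigma> \<tau> = concat (map ty [0..<length \<gamma>])"
    by (simp add: plug_ty_def ty_def)
  have var: "plug_var \<gamma> \<eta> i pv qv = concat (map var [0..<length \<gamma>])"
    by (simp add: plug_var_def var_def)
  have len: "\<forall>u \<in> set [0..<length \<gamma>]. length (ty u) = length (var u)"
    using \<sigma> \<tau> by (simp add: ty_def var_def)
  have substituted: "subst ?Ds X Y (i + k) (plug_ty \<gamma> \<eta> i n \<sigma> \<tau>) (plug_var \<gamma> \<eta> i pv qv)
      = concat (map block [0..<length \<gamma>])"
    unfolding ty var subst_concat[OF len] by (rule arg_cong[where f = concat]) (simp add: blocks)
  have split: "split_by (plug_lens \<gamma> \<eta> i (length \<sigma>) (length \<tau>)) (concat (map block [0..<length \<gamma>]))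
      = map block [0..<length \<gamma>]"
    unfolding plug_lens_def by (rule split_by_concat) (simp add: block_def)
  show ?thesis
    unfolding plug_m_def Let_def substituted split
    by (auto simp: subst_def[of DB] \<eta>(1) block_def intro!: arg_cong[where f = Outer])
qed

lemma block_update_in_obs:
  "A \<in> obs C n \<Longrightarrow> B \<in> obs C m \<Longrightarrow> i < m \<Longrightarrow> block_update B i A \<in> obs C (m - 1 + n)"
  by (auto simp: obs_def block_update_def dest: in_set_takeD in_set_dropD)

lemma obs_eq_block_update:
  assumes Cs: "Cs \<in> obs C (m - 1 + n)" and i: "i < m" and a: "a \<in> Ob C"
  obtains A B where "A \<in> obs C n" "B \<in> obs C m" "Cs = block_update B i A"
proof
  \<comment> \<open>The \<open>i\<close>-th entry of \<open>B\<close> is overwritten by \<open>block_update\<close>; \<open>a\<close> merely fills it.\<close>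
  let ?A = "take n (drop i Cs)" and ?B = "take i Cs @ [a] @ drop (i + n) Cs"
  show "?A \<in> obs C n" "?B \<in> obs C m"
    using Cs i a by (auto simp: obs_def dest: in_set_takeD in_set_dropD)
  show "Cs = block_update ?B i ?A"
    using Cs i by (simp add: obs_def block_update_def min_def) (metis append_take_drop_id
        add.commute drop_drop)
qed

lemma subst_cl_ty: "subst A X Y 0 cl_ty cl_var = [Y, X, X, Y]"
  by (simp add: subst_def cl_ty_def cl_var_def upt_rec)

lemma cl_dom_m_foc_m:
  "cl_dom_m (foc_m C Fm \<alpha> \<sigma> A k) (foc_m C Gm \<beta> \<tau> A k) (foc_m C Hm \<gamma> \<eta> B i)
     (subst Ds X Y 0 cl_ty cl_var)
   = Hm (subst (map (Id C) B) (Gm (subst (map (Id C) A) Y X k \<tau> \<beta>))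
          (Fm (subst (map (Id C) A) X Y k \<sigma> \<alpha>)) i \<eta> \<gamma>)"
  by (simp add: subst_cl_ty cl_dom_m_def foc_m_def)

lemma cl_cod_m_foc_m:
  "cl_cod_m (foc_m C Fm \<alpha> \<sigma> A k) (foc_m C Gm \<beta> \<tau> A k) (foc_m C Km \<delta> \<theta> B i)
     (subst Ds X Y 0 cl_ty cl_var)
   = Km (subst (map (Id C) B) (Fm (subst (map (Id C) A) Y X k \<sigma> \<alpha>))
          (Gm (subst (map (Id C) A) X Y k \<tau> \<beta>)) i \<theta> \<delta>)"
  by (simp add: subst_cl_ty cl_cod_m_def foc_m_def)

definition dinatural_hexagon ::
  "('o, 'm) category \<Rightarrow> bool list \<Rightarrow> nat list \<Rightarrow> ('m list \<Rightarrow> 'm)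
   \<Rightarrow> bool list \<Rightarrow> nat list \<Rightarrow> ('m list \<Rightarrow> 'm) \<Rightarrow> ('o list \<Rightarrow> 'm) \<Rightarrow> nat
   \<Rightarrow> 'o list \<Rightarrow> 'o \<Rightarrow> 'o \<Rightarrow> 'm \<Rightarrow> bool" where
  "dinatural_hexagon C \<alpha> \<sigma> Fm \<beta> \<tau> Gm \<phi> i A a b f \<longleftrightarrow>
     Comp C (Gm (subst (map (Id C) A) (Id C a) f i \<tau> \<beta>))
       (Comp C (\<phi> (A[i := a])) (Fm (subst (map (Id C) A) f (Id C a) i \<sigma> \<alpha>)))
   = Comp C (Gm (subst (map (Id C) A) f (Id C b) i \<tau> \<beta>))
       (Comp C (\<phi> (A[i := b])) (Fm (subst (map (Id C) A) (Id C b) f i \<sigma> \<alpha>)))"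

lemma dinatural_iff_hexagon:
  "dinatural C n \<alpha> \<sigma> Fm \<beta> \<tau> Gm \<phi> i \<longleftrightarrow>
   (\<forall>A \<in> obs C n. \<forall>a \<in> Ob C. \<forall>b \<in> Ob C. \<forall>f \<in> Hom C a b.
      dinatural_hexagon C \<alpha> \<sigma> Fm \<beta> \<tau> Gm \<phi> i A a b f)"
  by (simp add: dinatural_def dinatural_hexagon_def)

context
  fixes C :: "('o, 'm) category" and n m i k :: nat
    and \<alpha> \<beta> \<gamma> \<delta> :: "bool list" and \<sigma> \<tau> \<eta> \<theta> :: "nat list"
    and Fo Go Ho Ko :: "'o list \<Rightarrow> 'o" and \<phi> \<psi> :: "'o list \<Rightarrow> 'm"
  assumes phi: "is_transf C n \<alpha> \<sigma> Fo \<beta> \<tau> Go \<phi>"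
    and psi: "is_transf C m \<gamma> \<eta> Ho \<delta> \<theta> Ko \<psi>"
    and i: "i < m" and k: "k < n"
begin

lemma hcomp_dom_subst_block_update:
  assumes "length A = n" "length B = m"
  shows "plug_m \<gamma> \<eta> i (length \<alpha>) (length \<beta>) Hm Fm Gm
      (subst (map (Id C) (block_update B i A)) X Y (i + k)
        (plug_ty \<gamma> \<eta> i n \<sigma> \<tau>) (plug_var \<gamma> \<eta> i \<alpha> \<beta>))
    = cl_dom_m (foc_m C Fm \<alpha> \<sigma> A k) (foc_m C Gm \<beta> \<tau> A k) (foc_m C Hm \<gamma> \<eta> B i)
        (subst Ds X Y 0 cl_ty cl_var)"
  using plug_m_subst_block_update[of \<eta> \<gamma> "map (Id C) B" \<sigma> \<alpha> n \<tau> \<beta> "map (Id C) A" k i Hm Fm Gm X Y]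
    phi psi i k assms
  by (simp add: is_transf_def map_block_update cl_dom_m_foc_m)

lemma hcomp_cod_subst_block_update:
  assumes "length A = n" "length B = m"
  shows "plug_m \<delta> \<theta> i (length \<beta>) (length \<alpha>) Km Gm Fm
      (subst (map (Id C) (block_update B i A)) X Y (i + k)
        (plug_ty \<delta> \<theta> i n \<tau> \<sigma>) (plug_var \<delta> \<theta> i \<beta> \<alpha>))
    = cl_cod_m (foc_m C Fm \<alpha> \<sigma> A k) (foc_m C Gm \<beta> \<tau> A k) (foc_m C Km \<delta> \<theta> B i)
        (subst Ds X Y 0 cl_ty cl_var)"
  using plug_m_subst_block_update[of \<theta> \<delta> "map (Id C) B" \<tau> \<beta> n \<sigma> \<alpha> "map (Id C) A" k i Km Gm Fm X Y]
    phi psi i k assms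
  by (simp add: is_transf_def map_block_update cl_cod_m_foc_m)

lemma hcomp_block_update_eq_cl_comp:
  assumes A: "length A = n" and B: "length B = m"
  shows "hcomp C i n \<sigma> Fo \<phi> \<gamma> \<eta> Hm \<delta> \<theta> Km \<psi> ((block_update B i A)[i + k := c])
    = cl_comp C (foc_o Fo \<alpha> \<sigma> A k) (foc_t \<phi> A k) (foc_t \<psi> B i)
        (foc_m C Hm \<gamma> \<eta> B i) (foc_m C Km \<delta> \<theta> B i) [c]"
proof -
  let ?A = "A[k := c]"
  let ?x = "Fo (reidx ?A \<sigma>)"
  have Cs: "(block_update B i A)[i + k := c] = block_update B i ?A"
    using A B i k by (simp add: block_update_list_update)
  have inner: "take n (drop i (block_update B i ?A)) = ?A"
    using A B i by (simp add: drop_block_update)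
  have outer: "take i (block_update B i ?A) @ [?x] @ drop (i + n) (block_update B i ?A) = B[i := ?x]"
    using A B i by (simp add: block_update_def upd_conv_take_nth_drop)
  have "subst A c c k \<sigma> \<alpha> = reidx ?A \<sigma>"
    using phi A by (simp add: is_transf_def subst_same_eq_reidx)
  then show ?thesis
    unfolding Cs hcomp_def Let_def inner outer
    by (simp add: cl_comp_def Let_def foc_o_def foc_t_def foc_m_def map_update subst_list_update_same)
qed

lemma hcomp_hexagon_iff_cl_comp_hexagon:
  assumes "length A = n" "length B = m" "length L = 1"
  shows "dinatural_hexagon C
      (plug_var \<gamma> \<eta> i \<alpha> \<beta>) (plug_ty \<gamma> \<eta> i n \<sigma> \<tau>) (plug_m \<gamma> \<eta> i (length \<alpha>) (length \<beta>) Hm Fm Gm)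
      (plug_var \<delta> \<theta> i \<beta> \<alpha>) (plug_ty \<delta> \<theta> i n \<tau> \<sigma>) (plug_m \<delta> \<theta> i (length \<beta>) (length \<alpha>) Km Gm Fm)
      (hcomp C i n \<sigma> Fo \<phi> \<gamma> \<eta> Hm \<delta> \<theta> Km \<psi>) (i + k) (block_update B i A) a b f
    \<longleftrightarrow> dinatural_hexagon C
      cl_var cl_ty (cl_dom_m (foc_m C Fm \<alpha> \<sigma> A k) (foc_m C Gm \<beta> \<tau> A k) (foc_m C Hm \<gamma> \<eta> B i))
      cl_var cl_ty (cl_cod_m (foc_m C Fm \<alpha> \<sigma> A k) (foc_m C Gm \<beta> \<tau> A k) (foc_m C Km \<delta> \<theta> B i))
      (cl_comp C (foc_o Fo \<alpha> \<sigma> A k) (foc_t \<phi> A k) (foc_t \<psi> B i)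
         (foc_m C Hm \<gamma> \<eta> B i) (foc_m C Km \<delta> \<theta> B i)) 0 L a b f"
proof -
  have "L[0 := c] = [c]" for c
    using assms(3) by (cases L) auto
  then show ?thesis
    using assms unfolding dinatural_hexagon_def
    by (simp add: hcomp_dom_subst_block_update[where Ds = "map (Id C) L"]
        hcomp_cod_subst_block_update[where Ds = "map (Id C) L"] hcomp_block_update_eq_cl_comp)
qed

end

theorem mainTheorem11:
  fixes C :: "('o, 'm) category"
    and \<alpha> \<beta> \<gamma> \<delta> :: "bool list"
    and \<sigma> \<tau> \<eta> \<theta> :: "nat list"
    and Fo Go Ho Ko :: "'o list \<Rightarrow> 'o"
    and Fm Gm Hm Km :: "'m list \<Rightarrow> 'm"
    and \<phi> \<psi> :: "'o list \<Rightarrow> 'm"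
    and n m i k :: nat
  assumes cat: "is_category C"
    and F: "mvfunctor C \<alpha> Fo Fm" and G: "mvfunctor C \<beta> Go Gm"
    and H: "mvfunctor C \<gamma> Ho Hm" and K: "mvfunctor C \<delta> Ko Km"
    and phi: "is_transf C n \<alpha> \<sigma> Fo \<beta> \<tau> Go \<phi>"
    and psi: "is_transf C m \<gamma> \<eta> Ho \<delta> \<theta> Ko \<psi>"
    and i: "i < m"
    and psi_din: "dinatural C m \<gamma> \<eta> Hm \<delta> \<theta> Km \<psi> i"
    and k: "k < n"
  shows "dinatural C (m - 1 + n)
           (plug_var \<gamma> \<eta> i \<alpha> \<beta>) (plug_ty \<gamma> \<eta> i n \<sigma> \<tau>)
           (plug_m \<gamma> \<eta> i (length \<alpha>) (length \<beta>) Hm Fm Gm)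
           (plug_var \<delta> \<theta> i \<beta> \<alpha>) (plug_ty \<delta> \<theta> i n \<tau> \<sigma>)
           (plug_m \<delta> \<theta> i (length \<beta>) (length \<alpha>) Km Gm Fm)
           (hcomp C i n \<sigma> Fo \<phi> \<gamma> \<eta> Hm \<delta> \<theta> Km \<psi>) (i + k)
         \<longleftrightarrow>
         (\<forall>A \<in> obs C n. \<forall>B \<in> obs C m.
            dinatural C 1
              cl_var cl_ty
              (cl_dom_m (foc_m C Fm \<alpha> \<sigma> A k) (foc_m C Gm \<beta> \<tau> A k) (foc_m C Hm \<gamma> \<eta> B i))
              cl_var cl_ty
              (cl_cod_m (foc_m C Fm \<alpha> \<sigma> A k) (foc_m C Gm \<beta> \<tau> A k) (foc_m C Km \<delta> \<theta> B i))
              (cl_comp C (foc_o Fo \<alpha> \<sigma> A k) (foc_t \<phi> A k) (foc_t \<psi> B i)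
                 (foc_m C Hm \<gamma> \<eta> B i) (foc_m C Km \<delta> \<theta> B i))
              0)"
proof -
  note hexagon_iff = hcomp_hexagon_iff_cl_comp_hexagon[OF phi psi i k]
  show ?thesis
    unfolding dinatural_iff_hexagon
  proof (intro iffI ballI, goal_cases)
    case (1 A B L a b f)
    have "length A = n" "length B = m" "length L = 1"
      using 1(2-4) by (simp_all add: obs_def)
    from hexagon_iff[OF this, THEN iffD1]
      1(1)[rule_format, OF block_update_in_obs[OF 1(2,3) i] 1(5-7)]
    show ?case .
  next
    case (2 Cs a b f)
    obtain A B where A: "A \<in> obs C n" and B: "B \<in> obs C m" and Cs: "Cs = block_update B i A"
      using obs_eq_block_update[OF 2(2) i 2(3)] .
    have a: "[a] \<in> obs C 1" using 2(3) by (simp add: obs_def)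
    have "length A = n" "length B = m" "length [a] = 1"
      using A B by (simp_all add: obs_def)
    from hexagon_iff[OF this, THEN iffD2] 2(1)[rule_format, OF A B a 2(3-5)]
    show ?case unfolding Cs .
  qed
qed

end
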